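(* Let $\mu$ be a probability measure on $[0,\infty)$ with mean $1$ such that $\Lambda_\mu$ is finite on a neighborhood of $0$, and let $P$ be a probability measure on $(\Omega,\mathcal{M})$. (1) If $Q\ll P$ and there is $r_0>0$ such that $P(dQ/dP\ge r)\ge G_\mu(r)$ for all $r\in[0,r_0]$ and $P(dQ/dP\ge r)\le G_\mu(r)$ for all $r>r_0$, then $Q\in\mathcal{U}^\mu(P)$. (2) Suppose $Q_0\in\mathcal{U}^\mu(P)$ and $Q\ll P$ is a probability measure. If there is $r_0>0$ such that, $P$-a.s., $r_0 1_{dQ_0/dP\le r_0}\ge\frac{dQ}{dP}1_{dQ_0/dP\le r_0}\ge\frac{dQ_0}{dP}1_{dQ_0/dP\le r_0}$ and $r_01_{dQ_0/dP\ge r_0}\le\frac{dQ}{dP}1_{dQ_0/dP\ge r_0}\le\frac{dQ_0}{dP}1_{dQ_0/dP\ge r_0}$, then $Q\in\mathcal{U}^\mu(P)$. (3) Suppose $Q_0\in\mathcal{U}^\mu(P)$, $Q$ is a probability measure, and $\nu$ is a $\sigma$-finite positive measure with $dQ_0=q_0\,d\nu$, $dP=p\,d\nu$, $dQ=q\,d\nu$. If there is $r_0>0$ such that $q(x)$ lies between $q_0(x)$ and $r_0p(x)$ for $\nu$-a.e. $x$, then $Q\in\mathcal{U}^\mu(P)$.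
   Context: For a probability measure $\mu$ on $[0,\infty)$ with mean $1$, $G_\mu(r)=\mu([r,\infty))$ for $r\ge0$ and $\Lambda_\mu(\lambda)=\log\big((\lambda+1)\int_0^\infty G_\mu(z)z^\lambda\,dz\big)$ for $\lambda\ge0$. With $\Lambda_Q^f(\lambda)=\log E_Q[e^{\lambda f}]$, and $\Lambda_\mu$ finite near $0$, $\mathcal{U}^\mu(P)=\{Q \text{ probability measure}: Q\ll P,\ \Lambda_Q^{\log(dQ/dP)}(\lambda)\le\Lambda_\mu(\lambda)\ \text{for all }\lambda>0\}$. *)

theory Defs
  imports "HOL-Probability.Probability"
begin

definition ln_ennreal :: "ennreal \<Rightarrow> ereal" where
  "ln_ennreal x = (if x = \<infinity> then \<infinity> else if x = 0 then - \<infinity>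
                   else ereal (ln (enn2real x)))"

definition G_mu :: "real measure \<Rightarrow> real \<Rightarrow> real" where
  "G_mu mu r = measure mu {r..}"

definition Lambda_mu :: "real measure \<Rightarrow> real \<Rightarrow> ereal" where
  "Lambda_mu mu l = ln_ennreal (ennreal (l + 1) *
      (\<integral>\<^sup>+ z \<in> {0<..}. ennreal (G_mu mu z * z powr l) \<partial>lborel))"

definition Lambda_Q :: "'a measure \<Rightarrow> ('a \<Rightarrow> real) \<Rightarrow> real \<Rightarrow> ereal" where
  "Lambda_Q Q f l = ln_ennreal (\<integral>\<^sup>+ x. ennreal (exp (l * f x)) \<partial>Q)"

definition log_dens :: "'a measure \<Rightarrow> 'a measure \<Rightarrow> 'a \<Rightarrow> real" where
  "log_dens P Q x = ln (enn2real (RN_deriv P Q x))"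

definition U_mu :: "real measure \<Rightarrow> 'a measure \<Rightarrow> 'a measure set" where
  "U_mu mu P = {Q. prob_space Q \<and> sets Q = sets P \<and> absolutely_continuous P Q \<and>
      (\<forall>l>0. Lambda_Q Q (log_dens P Q) l \<le> Lambda_mu mu l)}"

end

theory Submission
  imports Defs
begin

text \<open>Write \<open>Z = dQ/dP\<close>. Then \<open>exp \<Lambda>\<^sub>Q(\<lambda>) = E\<^sub>Q[Z^\<lambda>] = E\<^sub>P[Z^(1+\<lambda>)] = (1+\<lambda>) \<integral>\<^sub>0\<^sup>\<infinity> P(Z \<ge> s) s^\<lambda> ds\<close>
  by the layer cake formula, and \<open>exp \<Lambda>\<^sub>\<mu>(\<lambda>)\<close> is the same integral with \<open>G\<^sub>\<mu>\<close> in place of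
  the tail of \<open>Z\<close>; both tails integrate to \<open>1\<close>, the common mean of \<open>Z\<close> and \<open>\<mu>\<close>.
  In (1) the two tails cross once, at \<open>r\<^sub>0\<close>, so
  \<open>\<integral> (P(Z \<ge> s) - G\<^sub>\<mu>(s)) (s^\<lambda> - r\<^sub>0^\<lambda>) ds \<le> 0\<close>, which is the required moment bound.
  In (2) the tangent to \<open>z^(1+\<lambda>)\<close> at \<open>Z\<close>, with \<open>Z\<close> between \<open>Z\<^sub>0 = dQ\<^sub>0/dP\<close> and \<open>r\<^sub>0\<close>, gives
  \<open>Z^(1+\<lambda>) - Z\<^sub>0^(1+\<lambda>) \<le> (1+\<lambda>) r\<^sub>0^\<lambda> (Z - Z\<^sub>0)\<close>, whose right-hand side has \<open>P\<close>-integral \<open>0\<close>;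
  so the moments of \<open>Q\<close> are bounded by those of \<open>Q\<^sub>0\<close>. Statement (3) is (2) with
  \<open>dQ/dP = q/p\<close> and \<open>dQ\<^sub>0/dP = q\<^sub>0/p\<close>.\<close>

lemma ln_ennreal_mono:
  assumes "x \<le> y"
  shows "ln_ennreal x \<le> ln_ennreal y"
proof -
  consider "y = \<infinity>" | "x = 0" | "y \<noteq> \<infinity>" "x \<noteq> 0" by blast
  then show ?thesis
  proof cases
    case 3
    then have "x < \<infinity>" using assms by (simp add: less_top)
    then have "0 < enn2real x" using 3 by (simp add: enn2real_positive_iff zero_less_iff_neq_zero)
    moreover have "enn2real x \<le> enn2real y" using assms 3 by (simp add: enn2real_mono less_top)
    ultimately show ?thesis using 3 assms \<open>x < \<infinity>\<close> by (auto simp: ln_ennreal_def)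
  qed (auto simp: ln_ennreal_def)
qed

definition RN_moment :: "'a measure \<Rightarrow> 'a measure \<Rightarrow> real \<Rightarrow> ennreal" where
  "RN_moment P Q l = (\<integral>\<^sup>+x. ennreal (enn2real (RN_deriv P Q x) powr (1 + l)) \<partial>P)"

lemma (in prob_space) nn_integral_RN_deriv_real:
  assumes Q: "prob_space Q" and sets_Q: "sets Q = sets M" and ac: "absolutely_continuous M Q"
  shows "(\<integral>\<^sup>+x. ennreal (enn2real (RN_deriv M Q x)) \<partial>M) = 1"
proof -
  interpret Q: prob_space Q by fact
  have "(\<integral>\<^sup>+x. ennreal (enn2real (RN_deriv M Q x)) \<partial>M) = (\<integral>\<^sup>+x. RN_deriv M Q x * 1 \<partial>M)"
    using RN_deriv_finite[OF Q.sigma_finite_measure_axioms ac sets_Q]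
    by (intro nn_integral_cong_AE) (auto simp: less_top)
  also have "\<dots> = (\<integral>\<^sup>+x. 1 \<partial>Q)"
    using RN_deriv_nn_integral[OF ac sets_Q, of "\<lambda>_. 1"] by simp
  finally show ?thesis using Q.emeasure_space_1 by simp
qed

lemma (in prob_space) Lambda_Q_log_dens:
  assumes Q: "prob_space Q" and sets_Q: "sets Q = sets M" and ac: "absolutely_continuous M Q"
  shows "Lambda_Q Q (log_dens M Q) l = ln_ennreal (RN_moment M Q l)"
proof -
  interpret Q: prob_space Q by fact
  have "(\<integral>\<^sup>+x. ennreal (exp (l * log_dens M Q x)) \<partial>Q) =
      (\<integral>\<^sup>+x. RN_deriv M Q x * ennreal (exp (l * ln (enn2real (RN_deriv M Q x)))) \<partial>M)"
    unfolding log_dens_def by (rule RN_deriv_nn_integral[OF ac sets_Q]) measurable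
  also have "\<dots> = RN_moment M Q l"
    unfolding RN_moment_def
  proof (rule nn_integral_cong_AE)
    show "AE x in M. RN_deriv M Q x * ennreal (exp (l * ln (enn2real (RN_deriv M Q x)))) =
        ennreal (enn2real (RN_deriv M Q x) powr (1 + l))"
      using RN_deriv_finite[OF Q.sigma_finite_measure_axioms ac sets_Q]
    proof eventually_elim
      case (elim x)
      then obtain z where z: "RN_deriv M Q x = ennreal z" "0 \<le> z"
        by (cases "RN_deriv M Q x") auto
      show ?case
      proof (cases "z = 0")
        case False
        then have "z powr (1 + l) = z * exp (l * ln z)"
          using z by (simp add: powr_def distrib_right exp_add)
        then show ?thesis using z by (simp add: ennreal_mult)
      qed (simp add: z)
    qed
  qed
  finally show ?thesis unfolding Lambda_Q_def by simp
qed

lemma U_mu_iff: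
  "Q \<in> U_mu mu P \<longleftrightarrow> prob_space Q \<and> sets Q = sets P \<and> absolutely_continuous P Q \<and>
     (\<forall>l>0. ln_ennreal (RN_moment P Q l) \<le> Lambda_mu mu l)"
  if "prob_space P"
  using prob_space.Lambda_Q_log_dens[OF that] unfolding U_mu_def by auto

lemma nn_integral_powr_from_0:
  fixes z b :: real
  assumes "0 \<le> z" "0 \<le> b"
  shows "ennreal (z powr (b + 1)) = ennreal (b + 1) * (\<integral>\<^sup>+s\<in>{0..z}. ennreal (s powr b) \<partial>lborel)"
proof -
  have "(\<integral>\<^sup>+s\<in>{0..z}. ennreal (s powr b) \<partial>lborel) = ennreal (z powr (b + 1) / (b + 1))"
    using assms by (intro nn_integral_has_integral_lebesgue' has_integral_powr_from_0) auto
  moreover have "ennreal (b + 1) * ennreal (z powr (b + 1) / (b + 1)) = ennreal (z powr (b + 1))"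
    using assms by (subst ennreal_mult[symmetric]) auto
  ultimately show ?thesis by simp
qed

lemma (in finite_measure) nn_integral_powr_layer_cake:
  assumes Z[measurable]: "Z \<in> borel_measurable M"
    and Z_nonneg: "\<And>x. x \<in> space M \<Longrightarrow> 0 \<le> Z x" and b: "0 \<le> b"
  shows "(\<integral>\<^sup>+x. ennreal (Z x powr (b + 1)) \<partial>M) =
    ennreal (b + 1) * (\<integral>\<^sup>+s\<in>{0<..}. ennreal (measure M {x\<in>space M. s \<le> Z x} * s powr b) \<partial>lborel)"
proof -
  interpret pair_sigma_finite M lborel
    by (simp add: pair_sigma_finite_def sigma_finite_measure_axioms lborel.sigma_finite_measure_axioms)
  define F where "F p = (if 0 < snd p \<and> snd p \<le> Z (fst p) then ennreal (snd p powr b) else 0)"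
    for p :: "'a \<times> real"
  have F[measurable]: "F \<in> borel_measurable (M \<Otimes>\<^sub>M lborel)"
    unfolding F_def by measurable
  have "(\<integral>\<^sup>+x. ennreal (Z x powr (b + 1)) \<partial>M) = (\<integral>\<^sup>+x. ennreal (b + 1) * (\<integral>\<^sup>+s. F (x, s) \<partial>lborel) \<partial>M)"
  proof (rule nn_integral_cong)
    fix x assume "x \<in> space M"
    moreover have "(\<integral>\<^sup>+s. F (x, s) \<partial>lborel) = (\<integral>\<^sup>+s\<in>{0..Z x}. ennreal (s powr b) \<partial>lborel)"
      by (rule nn_integral_cong) (auto simp: F_def indicator_def)
    ultimately show "ennreal (Z x powr (b + 1)) = ennreal (b + 1) * (\<integral>\<^sup>+s. F (x, s) \<partial>lborel)"
      using nn_integral_powr_from_0[OF Z_nonneg b] by simp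
  qed
  also have "\<dots> = ennreal (b + 1) * (\<integral>\<^sup>+s. (\<integral>\<^sup>+x. F (x, s) \<partial>M) \<partial>lborel)"
    using Fubini[OF F] lborel.borel_measurable_nn_integral_fst[OF F]
    by (subst nn_integral_cmult) auto
  also have "(\<integral>\<^sup>+s. (\<integral>\<^sup>+x. F (x, s) \<partial>M) \<partial>lborel) =
      (\<integral>\<^sup>+s\<in>{0<..}. ennreal (measure M {x\<in>space M. s \<le> Z x} * s powr b) \<partial>lborel)"
  proof (rule nn_integral_cong)
    fix s :: real
    have A: "{x\<in>space M. s \<le> Z x} \<in> sets M" by measurable
    have "(\<integral>\<^sup>+x. F (x, s) \<partial>M) =
        (\<integral>\<^sup>+x. (ennreal (s powr b) * indicator {0<..} s) * indicator {x\<in>space M. s \<le> Z x} x \<partial>M)"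
      by (rule nn_integral_cong) (auto simp: F_def indicator_def)
    also have "\<dots> = ennreal (s powr b) * indicator {0<..} s * emeasure M {x\<in>space M. s \<le> Z x}"
      using A by (rule nn_integral_cmult_indicator)
    also have "\<dots> = ennreal (measure M {x\<in>space M. s \<le> Z x} * s powr b) * indicator {0<..} s"
      by (simp add: emeasure_eq_measure ennreal_mult mult_ac)
    finally show "(\<integral>\<^sup>+x. F (x, s) \<partial>M) =
        ennreal (measure M {x\<in>space M. s \<le> Z x} * s powr b) * indicator {0<..} s" .
  qed
  finally show ?thesis .
qed

lemma (in finite_measure) nn_integral_layer_cake:
  assumes "Z \<in> borel_measurable M" "\<And>x. x \<in> space M \<Longrightarrow> 0 \<le> Z x"
  shows "(\<integral>\<^sup>+x. ennreal (Z x) \<partial>M) =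
    (\<integral>\<^sup>+s\<in>{0<..}. ennreal (measure M {x\<in>space M. s \<le> Z x}) \<partial>lborel)"
proof -
  have "(\<integral>\<^sup>+x. ennreal (Z x) \<partial>M) = (\<integral>\<^sup>+x. ennreal (Z x powr (0 + 1)) \<partial>M)"
    using assms(2) by (intro nn_integral_cong) simp
  also have "\<dots> = ennreal (0 + 1) *
      (\<integral>\<^sup>+s\<in>{0<..}. ennreal (measure M {x\<in>space M. s \<le> Z x} * s powr 0) \<partial>lborel)"
    by (rule nn_integral_powr_layer_cake[OF assms order_refl])
  also have "\<dots> = (\<integral>\<^sup>+s\<in>{0<..}. ennreal (measure M {x\<in>space M. s \<le> Z x}) \<partial>lborel)"
    by (auto intro!: nn_integral_cong simp: indicator_def)
  finally show ?thesis .
qed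

lemma integral_G_mu:
  assumes "prob_space mu" "sets mu = sets borel" "emeasure mu {0..} = 1" "integrable mu (\<lambda>x. x)"
  shows "(\<integral>\<^sup>+s\<in>{0<..}. ennreal (G_mu mu s) \<partial>lborel) = ennreal (\<integral>x. x \<partial>mu)"
proof -
  interpret prob_space mu by fact
  have space: "space mu = UNIV" using sets_eq_imp_space_eq[OF assms(2)] by simp
  have nonneg: "AE x in mu. 0 \<le> x"
    using AE_prob_1[of "{0..}"] assms(3) by (simp add: measure_def)
  have "(\<integral>\<^sup>+s\<in>{0<..}. ennreal (G_mu mu s) \<partial>lborel) =
      (\<integral>\<^sup>+s\<in>{0<..}. ennreal (measure mu {x\<in>space mu. s \<le> max 0 x}) \<partial>lborel)"
  proof (intro nn_integral_cong)
    fix s :: real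
    have "0 < s \<Longrightarrow> {x\<in>space mu. s \<le> max 0 x} = {s..}" by (auto simp: space)
    then show "ennreal (G_mu mu s) * indicator {0<..} s =
        ennreal (measure mu {x\<in>space mu. s \<le> max 0 x}) * indicator {0<..} s"
      by (cases "0 < s") (auto simp: G_mu_def)
  qed
  also have "\<dots> = (\<integral>\<^sup>+x. ennreal (max 0 x) \<partial>mu)"
    by (intro nn_integral_layer_cake[symmetric]) (auto simp: measurable_cong_sets[OF assms(2) refl])
  also have "\<dots> = (\<integral>\<^sup>+x. ennreal x \<partial>mu)"
    using nonneg by (intro nn_integral_cong_AE) auto
  also have "\<dots> = ennreal (\<integral>x. x \<partial>mu)"
    using nonneg by (intro nn_integral_eq_integral assms(4))
  finally show ?thesis .
qed

lemma borel_measurable_antimono: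
  fixes f :: "real \<Rightarrow> real"
  assumes "\<And>x y. x \<le> y \<Longrightarrow> f y \<le> f x"
  shows "f \<in> borel_measurable borel"
proof -
  have "(\<lambda>x. - f x) \<in> borel_measurable borel"
    by (rule borel_measurable_mono) (auto simp: mono_def assms)
  from borel_measurable_uminus[OF this] show ?thesis by simp
qed

lemma nn_integral_mono_compensated:
  fixes f g h k :: "'a \<Rightarrow> ennreal"
  assumes [measurable]: "f \<in> borel_measurable M" "g \<in> borel_measurable M"
    "h \<in> borel_measurable M" "k \<in> borel_measurable M"
    and le: "AE x in M. f x + c * g x \<le> h x + c * k x"
    and eq: "(\<integral>\<^sup>+x. g x \<partial>M) = (\<integral>\<^sup>+x. k x \<partial>M)" and fin: "c * (\<integral>\<^sup>+x. g x \<partial>M) \<noteq> \<infinity>"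
  shows "(\<integral>\<^sup>+x. f x \<partial>M) \<le> (\<integral>\<^sup>+x. h x \<partial>M)"
proof -
  have "(\<integral>\<^sup>+x. f x \<partial>M) + c * (\<integral>\<^sup>+x. g x \<partial>M) = (\<integral>\<^sup>+x. f x + c * g x \<partial>M)"
    by (simp add: nn_integral_add nn_integral_cmult)
  also have "\<dots> \<le> (\<integral>\<^sup>+x. h x + c * k x \<partial>M)"
    using le by (rule nn_integral_mono_AE)
  also have "\<dots> = (\<integral>\<^sup>+x. h x \<partial>M) + c * (\<integral>\<^sup>+x. g x \<partial>M)"
    by (simp add: nn_integral_add nn_integral_cmult eq)
  finally show ?thesis
    using fin by (metis add.commute ennreal_add_left_cancel_le)
qed

lemma powr_above_tangent:
  fixes y z l :: real
  assumes "0 \<le> y" "0 < z" "0 \<le> l"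
  shows "z powr (1 + l) + (1 + l) * z powr l * (y - z) \<le> y powr (1 + l)"
proof (cases "y = 0")
  case True
  then show ?thesis using assms by (simp add: powr_add algebra_simps)
next
  case False
  have "convex_on {0<..} (\<lambda>x. x powr (1 + l))" using powr_convex[of "1 + l"] assms by simp
  from convex_on_imp_above_tangent[OF this, of z y "(1 + l) * z powr (1 + l - 1)"]
  show ?thesis
    using assms False has_real_derivative_powr[of z "1 + l"]
    by (auto simp: interior_open has_field_derivative_at_within)
qed

lemma powr_moment_exchange:
  fixes z0 z r0 l :: real
  assumes "0 \<le> z0" "0 \<le> z" "0 < r0" "0 \<le> l"
    and between: "min z0 r0 \<le> z" "z \<le> max z0 r0"
  shows "z powr (1 + l) + (1 + l) * r0 powr l * z0 \<le> z0 powr (1 + l) + (1 + l) * r0 powr l * z"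
proof (cases "z = 0")
  case True
  then show ?thesis using assms by (auto simp: min_def split: if_splits)
next
  case False
  then have z: "0 < z" using assms by simp
  have "r0 powr l * (z0 - z) \<le> z powr l * (z0 - z)"
  proof (cases "z \<le> z0")
    case True
    show ?thesis
    proof (cases "z = z0")
      case False
      then have "r0 \<le> z" using True between by (auto simp: min_def split: if_splits)
      then show ?thesis using True z assms by (auto intro!: mult_right_mono powr_mono2)
    qed simp
  next
    case False
    then have "z \<le> r0" using between by (auto simp: max_def split: if_splits)
    then show ?thesis using False z assms by (auto intro!: mult_right_mono_neg powr_mono2)
  qed
  then have "(1 + l) * r0 powr l * (z0 - z) \<le> (1 + l) * z powr l * (z0 - z)"
    using assms by (simp add: mult.assoc mult_left_mono)
  with powr_above_tangent[OF assms(1) z assms(4)] show ?thesis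
    by (simp add: algebra_simps)
qed

lemma ennreal_add_mult_le:
  fixes a b c a' b' :: real
  assumes "a + c * b \<le> a' + c * b'" "0 \<le> a" "0 \<le> b" "0 \<le> c" "0 \<le> a'" "0 \<le> b'"
  shows "ennreal a + ennreal c * ennreal b \<le> ennreal a' + ennreal c * ennreal b'"
  using assms by (simp add: ennreal_mult[symmetric] ennreal_plus[symmetric] del: ennreal_plus)

lemma U_mu_if_tail_crossing:
  assumes mu: "prob_space mu" "sets mu = sets borel" "emeasure mu {0..} = 1"
      "integrable mu (\<lambda>x. x)" "(\<integral>x. x \<partial>mu) = 1"
    and P: "prob_space P" and Q: "prob_space Q" and sets_Q: "sets Q = sets P"
    and ac: "absolutely_continuous P Q" and r0: "0 < r0"
    and above: "\<And>r. 0 \<le> r \<Longrightarrow> r \<le> r0 \<Longrightarrow>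
      G_mu mu r \<le> measure P {x \<in> space P. ennreal r \<le> RN_deriv P Q x}"
    and below: "\<And>r. r0 < r \<Longrightarrow>
      measure P {x \<in> space P. ennreal r \<le> RN_deriv P Q x} \<le> G_mu mu r"
  shows "Q \<in> U_mu mu P"
proof -
  interpret P: prob_space P by fact
  interpret mu: prob_space mu by fact
  define Z where "Z x = enn2real (RN_deriv P Q x)" for x
  have Z[measurable]: "Z \<in> borel_measurable P" unfolding Z_def by measurable
  have Z_nonneg: "0 \<le> Z x" for x by (simp add: Z_def)
  define T where "T s = measure P {x\<in>space P. s \<le> Z x}" for s
  have T[measurable]: "T \<in> borel_measurable borel"
    unfolding T_def by (rule borel_measurable_antimono) (auto intro!: P.finite_measure_mono)
  have G[measurable]: "G_mu mu \<in> borel_measurable borel"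
    unfolding G_mu_def using mu(2) by (intro borel_measurable_antimono mu.finite_measure_mono) auto
  have T_nonneg: "0 \<le> T s" and G_nonneg: "0 \<le> G_mu mu s" for s
    by (simp_all add: T_def G_mu_def)
  have T_eq: "T s = measure P {x \<in> space P. ennreal s \<le> RN_deriv P Q x}" if "0 < s" for s
  proof -
    have "AE x in P. (s \<le> Z x) = (ennreal s \<le> RN_deriv P Q x)"
      using P.RN_deriv_finite[OF prob_space_imp_sigma_finite[OF Q] ac sets_Q]
    proof eventually_elim
      case (elim x)
      then have "RN_deriv P Q x = ennreal (Z x)" by (simp add: Z_def less_top)
      then show ?case by (simp add: Z_nonneg)
    qed
    then have "emeasure P {x\<in>space P. s \<le> Z x} = emeasure P {x \<in> space P. ennreal s \<le> RN_deriv P Q x}"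
      by (intro emeasure_eq_AE) auto
    then show ?thesis unfolding T_def measure_def by simp
  qed
  have "(\<integral>\<^sup>+s\<in>{0<..}. ennreal (T s) \<partial>lborel) = (\<integral>\<^sup>+x. ennreal (Z x) \<partial>P)"
    unfolding T_def by (rule P.nn_integral_layer_cake[symmetric, OF Z Z_nonneg])
  also have "\<dots> = 1"
    unfolding Z_def by (rule P.nn_integral_RN_deriv_real[OF Q sets_Q ac])
  finally have T_int: "(\<integral>\<^sup>+s\<in>{0<..}. ennreal (T s) \<partial>lborel) = 1" .
  have G_int: "(\<integral>\<^sup>+s\<in>{0<..}. ennreal (G_mu mu s) \<partial>lborel) = 1"
    using integral_G_mu[OF mu(1-4)] mu(5) by simp
  have "RN_moment P Q l \<le> ennreal (l + 1) * (\<integral>\<^sup>+s\<in>{0<..}. ennreal (G_mu mu s * s powr l) \<partial>lborel)"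
    if l: "0 < l" for l
  proof -
    have crossing: "T s * s powr l + r0 powr l * G_mu mu s \<le> G_mu mu s * s powr l + r0 powr l * T s"
      if s: "0 < s" for s
    proof -
      have "(s powr l - r0 powr l) * (T s - G_mu mu s) \<le> 0"
      proof (cases "s \<le> r0")
        case True
        then show ?thesis using above[of s] T_eq s l
          by (intro mult_nonpos_nonneg) (auto intro: powr_mono2)
      next
        case False
        then show ?thesis using below[of s] T_eq s l r0
          by (intro mult_nonneg_nonpos) (auto intro: powr_mono2)
      qed
      then show ?thesis by (simp add: algebra_simps)
    qed
    have "RN_moment P Q l = ennreal (l + 1) * (\<integral>\<^sup>+s\<in>{0<..}. ennreal (T s * s powr l) \<partial>lborel)"
      unfolding RN_moment_def T_def add.commute[of 1 l] Z_def[symmetric]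
      using l by (intro P.nn_integral_powr_layer_cake Z Z_nonneg) simp
    also have "\<dots> \<le> ennreal (l + 1) * (\<integral>\<^sup>+s\<in>{0<..}. ennreal (G_mu mu s * s powr l) \<partial>lborel)"
    proof (intro mult_left_mono nn_integral_mono_compensated[where c = "ennreal (r0 powr l)"] AE_I2)
      fix s :: real
      show "ennreal (T s * s powr l) * indicator {0<..} s +
            ennreal (r0 powr l) * (ennreal (G_mu mu s) * indicator {0<..} s)
          \<le> ennreal (G_mu mu s * s powr l) * indicator {0<..} s +
            ennreal (r0 powr l) * (ennreal (T s) * indicator {0<..} s)"
        using ennreal_add_mult_le[OF crossing] T_nonneg G_nonneg by (simp add: indicator_def)
    qed (simp_all add: T_int G_int)
    finally show ?thesis .
  qed
  then show ?thesis
    unfolding U_mu_iff[OF P] Lambda_mu_def using Q sets_Q ac by (auto intro: ln_ennreal_mono)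
qed

lemma U_mu_if_RN_deriv_between:
  assumes P: "prob_space P" and Q0: "Q0 \<in> U_mu mu P" and Q: "prob_space Q"
    and sets_Q: "sets Q = sets P" and ac: "absolutely_continuous P Q" and r0: "0 < r0"
    and between: "AE x in P. min (RN_deriv P Q0 x) (ennreal r0) \<le> RN_deriv P Q x \<and>
                              RN_deriv P Q x \<le> max (RN_deriv P Q0 x) (ennreal r0)"
  shows "Q \<in> U_mu mu P"
proof -
  interpret P: prob_space P by fact
  from Q0 have Q0': "prob_space Q0" "sets Q0 = sets P" "absolutely_continuous P Q0"
    and Lambda_Q0: "\<And>l. 0 < l \<Longrightarrow> ln_ennreal (RN_moment P Q0 l) \<le> Lambda_mu mu l"
    unfolding U_mu_iff[OF P] by auto
  define Z where "Z x = enn2real (RN_deriv P Q x)" for x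
  define Z0 where "Z0 x = enn2real (RN_deriv P Q0 x)" for x
  have [measurable]: "Z \<in> borel_measurable P" "Z0 \<in> borel_measurable P"
    unfolding Z_def Z0_def by measurable
  have Z_int: "(\<integral>\<^sup>+x. ennreal (Z x) \<partial>P) = 1" and Z0_int: "(\<integral>\<^sup>+x. ennreal (Z0 x) \<partial>P) = 1"
    unfolding Z_def Z0_def by (rule P.nn_integral_RN_deriv_real[OF Q sets_Q ac] P.nn_integral_RN_deriv_real[OF Q0'])+
  have "RN_moment P Q l \<le> RN_moment P Q0 l" if l: "0 < l" for l
    unfolding RN_moment_def Z_def[symmetric] Z0_def[symmetric]
  proof (rule nn_integral_mono_compensated[where c = "ennreal ((1 + l) * r0 powr l)"])
    show "AE x in P. ennreal (Z x powr (1 + l)) + ennreal ((1 + l) * r0 powr l) * ennreal (Z0 x)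
        \<le> ennreal (Z0 x powr (1 + l)) + ennreal ((1 + l) * r0 powr l) * ennreal (Z x)"
      using P.RN_deriv_finite[OF prob_space_imp_sigma_finite[OF Q] ac sets_Q]
        P.RN_deriv_finite[OF prob_space_imp_sigma_finite[OF Q0'(1)] Q0'(3,2)] between
    proof eventually_elim
      case (elim x)
      have R: "RN_deriv P Q x = ennreal (Z x)" "RN_deriv P Q0 x = ennreal (Z0 x)"
        using elim(1,2) by (simp_all add: Z_def Z0_def less_top)
      have nonneg: "0 \<le> Z x" "0 \<le> Z0 x" by (simp_all add: Z_def Z0_def)
      have "min (Z0 x) r0 \<le> Z x" "Z x \<le> max (Z0 x) r0"
        using elim(3) r0 nonneg unfolding R by (auto simp: min_def max_def split: if_splits)
      from ennreal_add_mult_le[OF powr_moment_exchange[OF nonneg(2,1) r0 _ this]] l nonneg r0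
      show ?case by simp
    qed
  qed (simp_all add: Z_int Z0_int)
  then show ?thesis
    unfolding U_mu_iff[OF P] using Q sets_Q ac Lambda_Q0
    by (auto intro: order_trans[OF ln_ennreal_mono])
qed

lemma AE_density_zero_if_absolutely_continuous:
  assumes [measurable]: "p \<in> borel_measurable N" "q \<in> borel_measurable N"
    and ac: "absolutely_continuous (density N p) (density N q)"
  shows "AE x in N. p x = 0 \<longrightarrow> q x = 0"
proof -
  define A where "A = {x\<in>space N. p x = 0}"
  have A[measurable]: "A \<in> sets N" unfolding A_def by measurable
  have "emeasure (density N p) A = (\<integral>\<^sup>+x. p x * indicator A x \<partial>N)"
    by (rule emeasure_density) auto
  also have "\<dots> = 0"
    by (auto simp: A_def indicator_def intro!: nn_integral_zero')
  finally have "A \<in> null_sets (density N p)" using A by (simp add: null_sets_def)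
  then have "A \<in> null_sets (density N q)"
    using ac unfolding absolutely_continuous_def by auto
  then have "(\<integral>\<^sup>+x. q x * indicator A x \<partial>N) = 0"
    using emeasure_density[of q N A] A by (simp add: null_setsD1)
  then have "AE x in N. q x * indicator A x = 0"
    by (subst (asm) nn_integral_0_iff_AE) auto
  then show ?thesis
    using AE_space by eventually_elim (auto simp: A_def indicator_def split: if_splits)
qed

lemma density_density_divide:
  fixes p q :: "'a \<Rightarrow> ennreal"
  assumes [measurable]: "p \<in> borel_measurable N" "q \<in> borel_measurable N"
    and p_fin: "AE x in N. p x \<noteq> \<infinity>" and q_zero: "AE x in N. p x = 0 \<longrightarrow> q x = 0"
  shows "density (density N p) (\<lambda>x. q x / p x) = density N q"
proof -
  have "density (density N p) (\<lambda>x. q x / p x) = density N (\<lambda>x. p x * (q x / p x))"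
    by (rule density_density_eq) auto
  also have "\<dots> = density N q"
  proof (rule density_cong)
    show "AE x in N. p x * (q x / p x) = q x"
      using p_fin q_zero
    proof eventually_elim
      case (elim x)
      then show ?case
        by (cases "p x = 0") (auto simp: ennreal_times_divide ennreal_mult_divide_eq mult.commute[of "p x"])
    qed
  qed auto
  finally show ?thesis .
qed

lemma RN_deriv_density_divide:
  fixes p q :: "'a \<Rightarrow> ennreal"
  assumes "sigma_finite_measure (density N p)"
    and [measurable]: "p \<in> borel_measurable N" "q \<in> borel_measurable N"
    and "AE x in N. p x \<noteq> \<infinity>" and "AE x in N. p x = 0 \<longrightarrow> q x = 0"
  shows "AE x in density N p. RN_deriv (density N p) (density N q) x = q x / p x"
proof -
  interpret sigma_finite_measure "density N p" by fact
  have "(\<lambda>x. q x / p x) \<in> borel_measurable (density N p)"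
    by (simp add: measurable_cong_sets[OF sets_density refl])
  from RN_deriv_unique[OF this density_density_divide[OF assms(2-)]] show ?thesis
    by (auto elim: eventually_mono)
qed

lemma ennreal_divide_min_max_bounds:
  fixes a b c p :: ennreal
  assumes p: "p \<noteq> 0" "p \<noteq> \<infinity>" and lower: "min a (c * p) \<le> b" and upper: "b \<le> max a (c * p)"
  shows "min (a / p) c \<le> b / p \<and> b / p \<le> max (a / p) c"
proof -
  have iff: "x / p \<le> y / p \<longleftrightarrow> x \<le> y" for x y :: ennreal
  proof
    assume "x / p \<le> y / p"
    then have "x / p * p \<le> y / p * p" by (rule mult_right_mono) simp
    then show "x \<le> y" using p by (simp add: ennreal_divide_times less_top)
  qed (rule divide_right_mono_ennreal)
  have "min (a / p) (c * p / p) \<le> b / p" "b / p \<le> max (a / p) (c * p / p)"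
    using lower upper by (auto simp: min_def max_def iff split: if_splits)
  moreover have "c * p / p = c" using p by (simp add: ennreal_mult_divide_eq)
  ultimately show ?thesis by simp
qed

lemma U_mu_if_densities_between:
  fixes nu :: "'a measure"
  assumes P: "prob_space P" and Q0: "Q0 \<in> U_mu mu P" and Q: "prob_space Q"
    and [measurable]: "q0 \<in> borel_measurable nu" "q \<in> borel_measurable nu" "p \<in> borel_measurable nu"
    and Q0_eq: "Q0 = density nu q0" and P_eq: "P = density nu p" and Q_eq: "Q = density nu q"
    and r0: "0 < r0"
    and between: "AE x in nu. min (q0 x) (ennreal r0 * p x) \<le> q x \<and> q x \<le> max (q0 x) (ennreal r0 * p x)"
  shows "Q \<in> U_mu mu P"
proof -
  interpret P: prob_space P by fact
  have ac0: "absolutely_continuous P Q0" using Q0 unfolding U_mu_def by auto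
  have "(\<integral>\<^sup>+x. p x \<partial>nu) = 1"
    using P.emeasure_space_1 unfolding P_eq by (simp add: emeasure_density)
  then have p_fin: "AE x in nu. p x \<noteq> \<infinity>"
    by (intro nn_integral_PInf_AE) auto
  have q0_zero: "AE x in nu. p x = 0 \<longrightarrow> q0 x = 0"
    using AE_density_zero_if_absolutely_continuous[of p nu q0] ac0 unfolding P_eq Q0_eq by simp
  have q_zero: "AE x in nu. p x = 0 \<longrightarrow> q x = 0"
    using q0_zero between by eventually_elim (auto simp: max_def)
  have RN0: "AE x in P. RN_deriv P Q0 x = q0 x / p x" and RN: "AE x in P. RN_deriv P Q x = q x / p x"
    unfolding P_eq Q0_eq Q_eq using prob_space_imp_sigma_finite[OF P] p_fin q0_zero q_zero
    by (auto simp: P_eq intro!: RN_deriv_density_divide)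
  have "absolutely_continuous P (density P (\<lambda>x. q x / p x))"
    using P_eq by (intro absolutely_continuousI_density) (simp add: measurable_cong_sets[OF sets_density refl])
  then have ac: "absolutely_continuous P Q"
    unfolding P_eq Q_eq using p_fin q_zero by (simp add: density_density_divide)
  have "AE x in nu. 0 < p x \<longrightarrow>
      min (q0 x / p x) (ennreal r0) \<le> q x / p x \<and> q x / p x \<le> max (q0 x / p x) (ennreal r0)"
    using p_fin between
  proof eventually_elim
    case (elim x)
    then show ?case using ennreal_divide_min_max_bounds[of "p x" "q0 x" "ennreal r0" "q x"] by auto
  qed
  then have "AE x in P. min (q0 x / p x) (ennreal r0) \<le> q x / p x \<and> q x / p x \<le> max (q0 x / p x) (ennreal r0)"
    unfolding P_eq by (subst AE_density) auto
  with RN0 RN have "AE x in P. min (RN_deriv P Q0 x) (ennreal r0) \<le> RN_deriv P Q x \<and>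
                                RN_deriv P Q x \<le> max (RN_deriv P Q0 x) (ennreal r0)"
    by eventually_elim simp
  then show ?thesis
    using U_mu_if_RN_deriv_between[OF P Q0 Q _ ac r0] P_eq Q_eq by simp
qed

lemma min_max_bounds_iff:
  fixes z0 z r :: "'a :: linorder"
  shows "min z0 r \<le> z \<and> z \<le> max z0 r \<longleftrightarrow>
    (z0 \<le> r \<longrightarrow> z0 \<le> z \<and> z \<le> r) \<and> (r \<le> z0 \<longrightarrow> r \<le> z \<and> z \<le> z0)"
  by (auto simp: min_def max_def)

theorem mainTheorem8:
  fixes mu :: "real measure" and P :: "'a measure"
  assumes mu_prob: "prob_space mu"
    and mu_sets: "sets mu = sets borel"
    and mu_supp: "emeasure mu {0..} = 1"
    and mu_int: "integrable mu (\<lambda>x. x)"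
    and mu_mean: "(\<integral>x. x \<partial>mu) = 1"
    and mu_fin: "\<exists>\<epsilon>>0. \<forall>l. 0 \<le> l \<and> l < \<epsilon> \<longrightarrow>
                    Lambda_mu mu l \<noteq> \<infinity> \<and> Lambda_mu mu l \<noteq> - \<infinity>"
    and P_prob: "prob_space P"
  shows
    "(\<forall>Q r0. prob_space Q \<and> sets Q = sets P \<and> absolutely_continuous P Q \<and> r0 > 0 \<and>
        (\<forall>r. 0 \<le> r \<and> r \<le> r0 \<longrightarrow>
            measure P {x \<in> space P. RN_deriv P Q x \<ge> ennreal r} \<ge> G_mu mu r) \<and>
        (\<forall>r. r > r0 \<longrightarrow>
            measure P {x \<in> space P. RN_deriv P Q x \<ge> ennreal r} \<le> G_mu mu r)
      \<longrightarrow> Q \<in> U_mu mu P)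
   \<and>
    (\<forall>Q0 Q r0. Q0 \<in> U_mu mu P \<and> prob_space Q \<and> sets Q = sets P \<and>
        absolutely_continuous P Q \<and> r0 > 0 \<and>
        (AE x in P.
           (RN_deriv P Q0 x \<le> ennreal r0 \<longrightarrow>
              RN_deriv P Q0 x \<le> RN_deriv P Q x \<and> RN_deriv P Q x \<le> ennreal r0) \<and>
           (RN_deriv P Q0 x \<ge> ennreal r0 \<longrightarrow>
              ennreal r0 \<le> RN_deriv P Q x \<and> RN_deriv P Q x \<le> RN_deriv P Q0 x))
      \<longrightarrow> Q \<in> U_mu mu P)
   \<and>
    (\<forall>(nu :: 'a measure) Q0 Q q0 q p r0. Q0 \<in> U_mu mu P \<and> prob_space Q \<and>
        sigma_finite_measure nu \<and>
        q0 \<in> borel_measurable nu \<and> q \<in> borel_measurable nu \<and> p \<in> borel_measurable nu \<and>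
        Q0 = density nu q0 \<and> P = density nu p \<and> Q = density nu q \<and> r0 > 0 \<and>
        (AE x in nu. min (q0 x) (ennreal r0 * p x) \<le> q x \<and>
                     q x \<le> max (q0 x) (ennreal r0 * p x))
      \<longrightarrow> Q \<in> U_mu mu P)"
proof (intro conjI allI impI, goal_cases)
  case (1 Q r0)
  then show ?case
    using U_mu_if_tail_crossing[OF mu_prob mu_sets mu_supp mu_int mu_mean P_prob] by blast
next
  case (2 Q0 Q r0)
  then have "AE x in P. min (RN_deriv P Q0 x) (ennreal r0) \<le> RN_deriv P Q x \<and>
      RN_deriv P Q x \<le> max (RN_deriv P Q0 x) (ennreal r0)"
    unfolding min_max_bounds_iff by blast
  with 2 show ?case
    using U_mu_if_RN_deriv_between[OF P_prob] by blast
next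
  case (3 nu Q0 Q q0 q p r0)
  then show ?case
    using U_mu_if_densities_between[OF P_prob] by blast
qed

end
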